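(* Let $F$ be a hitting clause-set and $v$ a variable. Then $\mathrm{DP}_v(F)$ is a hitting clause-set.
   Context: Literals are variables $v$ and complements $\overline{v}$; a clause is a finite set of literals with no complementary pair; a clause-set is a finite set of clauses; for a set of literals $D$, $\overline{D}=\{\overline{y}:y\in D\}$. A clause-set $F$ is hitting if for all distinct $C,D\in F$ we have $C\cap\overline{D}\neq\emptyset$. $\mathrm{DP}_v(F) := \{C \in F : v \notin \mathrm{var}(C)\} \cup \{(C \cup D)\setminus\{v,\overline{v}\} : C, D \in F,\ C \cap \overline{D} = \{v\}\}$, where $\mathrm{var}(C)$ is the set of variables underlying the literals of $C$. *)

theory Defs
  imports Main
begin

datatype 'v lit = Pos 'v | Neg 'v

fun comp :: "'v lit \<Rightarrow> 'v lit" where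
  "comp (Pos v) = Neg v"
| "comp (Neg v) = Pos v"

fun var_of :: "'v lit \<Rightarrow> 'v" where
  "var_of (Pos v) = v"
| "var_of (Neg v) = v"

definition comp_set :: "'v lit set \<Rightarrow> 'v lit set" where
  "comp_set D = comp ` D"

definition vars :: "'v lit set \<Rightarrow> 'v set" where
  "vars C = var_of ` C"

definition clause :: "'v lit set \<Rightarrow> bool" where
  "clause C \<longleftrightarrow> finite C \<and> C \<inter> comp_set C = {}"

definition clause_set :: "'v lit set set \<Rightarrow> bool" where
  "clause_set F \<longleftrightarrow> finite F \<and> (\<forall>C\<in>F. clause C)"

definition hitting :: "'v lit set set \<Rightarrow> bool" where
  "hitting F \<longleftrightarrow> (\<forall>C\<in>F. \<forall>D\<in>F. C \<noteq> D \<longrightarrow> C \<inter> comp_set D \<noteq> {})"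

definition DP :: "'v \<Rightarrow> 'v lit set set \<Rightarrow> 'v lit set set" where
  "DP v F = {C \<in> F. v \<notin> vars C} \<union>
     {(C \<union> D) - {Pos v, Neg v} | C D. C \<in> F \<and> D \<in> F \<and> C \<inter> comp_set D = {Pos v}}"

end

theory Submission
  imports Defs
begin

text \<open>A clash on a literal whose variable is not \<open>v\<close> is inherited by resolvents on \<open>v\<close>.
  Two distinct clauses of \<open>DP\<^sub>v(F)\<close> come from distinct clauses of \<open>F\<close> that either share
  a \<open>v\<close>-literal (the two parents containing \<open>v\<close>, or the two containing \<open>\<not>v\<close>) or one of which
  has no \<open>v\<close>-literal. Since no clause contains a complementary pair, the clash that \<open>F\<close>
  provides between them is not on \<open>v\<close>, so it persists in \<open>DP\<^sub>v(F)\<close>.\<close>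

lemma comp_comp [simp]: "comp (comp x) = x"
  by (cases x) auto

lemma var_of_comp [simp]: "var_of (comp x) = var_of x"
  by (cases x) auto

lemma lit_cases_of_var_eq: "var_of x = var_of l \<Longrightarrow> x = l \<or> x = comp l"
  by (cases x; cases l) auto

lemma mem_comp_set_iff: "x \<in> comp_set D \<longleftrightarrow> comp x \<in> D"
  unfolding comp_set_def by (metis comp_comp image_iff)

lemma inter_comp_set_nonempty_iff: "C \<inter> comp_set D \<noteq> {} \<longleftrightarrow> (\<exists>x\<in>C. comp x \<in> D)"
  by (auto simp: mem_comp_set_iff)

lemma var_of_mem_vars: "x \<in> C \<Longrightarrow> var_of x \<in> vars C"
  unfolding vars_def by blast

lemma clause_comp_notin: "clause C \<Longrightarrow> x \<in> C \<Longrightarrow> comp x \<notin> C"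
  unfolding clause_def by (auto simp: mem_comp_set_iff)

lemma hitting_clash:
  "hitting F \<Longrightarrow> C \<in> F \<Longrightarrow> D \<in> F \<Longrightarrow> C \<noteq> D \<Longrightarrow> \<exists>x\<in>C. comp x \<in> D"
  unfolding hitting_def inter_comp_set_nonempty_iff by blast

lemma clash_var_ne_of_common_lit:
  assumes "clause C" "clause D" "l \<in> C" "l \<in> D" "x \<in> C" "comp x \<in> D"
  shows "var_of x \<noteq> var_of l"
  using assms clause_comp_notin lit_cases_of_var_eq by metis

definition resolvent :: "'v \<Rightarrow> 'v lit set \<Rightarrow> 'v lit set \<Rightarrow> 'v lit set" where
  "resolvent v C D = (C \<union> D) - {Pos v, Neg v}"

lemma mem_resolvent_iff: "x \<in> resolvent v C D \<longleftrightarrow> x \<in> C \<union> D \<and> var_of x \<noteq> v"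
  unfolding resolvent_def by (cases x) auto

lemma resolvable_lits:
  "C \<inter> comp_set D = {Pos v} \<Longrightarrow> Pos v \<in> C \<and> Neg v \<in> D"
  using mem_comp_set_iff[of "Pos v" D] by auto

lemma clause_resolvent:
  assumes C: "clause C" and D: "clause D" and CD: "C \<inter> comp_set D = {Pos v}"
  shows "clause (resolvent v C D)"
proof -
  have "comp x \<notin> resolvent v C D" if x: "x \<in> resolvent v C D" for x
  proof
    assume cx: "comp x \<in> resolvent v C D"
    have x_off_v: "var_of x \<noteq> v" and "x \<in> C \<union> D" and "comp x \<in> C \<union> D"
      using x cx by (auto simp: mem_resolvent_iff)
    moreover have clash_on_v: "var_of y = v" if "y \<in> C" "comp y \<in> D" for y
    proof -
      have "y \<in> C \<inter> comp_set D"
        using that by (simp add: mem_comp_set_iff)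
      then show ?thesis
        using CD by simp
    qed
    ultimately consider "x \<in> C" "comp x \<in> C" | "x \<in> D" "comp x \<in> D"
      | "x \<in> C" "comp x \<in> D" | "comp x \<in> C" "comp (comp x) \<in> D"
      by auto
    then show False
      using clause_comp_notin[OF C] clause_comp_notin[OF D] clash_on_v x_off_v
      by cases fastforce+
  qed
  moreover have "finite (resolvent v C D)"
    using C D unfolding clause_def resolvent_def by simp
  ultimately show ?thesis
    unfolding clause_def by (auto simp: mem_comp_set_iff)
qed

lemma DP_eq: "DP v F = {C \<in> F. v \<notin> vars C} \<union>
    {resolvent v C D | C D. C \<in> F \<and> D \<in> F \<and> C \<inter> comp_set D = {Pos v}}"
  unfolding DP_def resolvent_def ..

lemma DP_cases [consumes 1, case_names kept resolved]:
  assumes "A \<in> DP v F"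
  obtains "A \<in> F" "v \<notin> vars A"
  | C D where "A = resolvent v C D" "C \<in> F" "D \<in> F" "C \<inter> comp_set D = {Pos v}"
  using assms unfolding DP_eq by blast

lemma finite_DP:
  assumes "finite F"
  shows "finite (DP v F)"
proof -
  have "{resolvent v C D | C D. C \<in> F \<and> D \<in> F \<and> C \<inter> comp_set D = {Pos v}}
      \<subseteq> case_prod (resolvent v) ` (F \<times> F)"
    by blast
  then have "finite {resolvent v C D | C D. C \<in> F \<and> D \<in> F \<and> C \<inter> comp_set D = {Pos v}}"
    using assms by (simp add: finite_subset)
  then show ?thesis
    using assms unfolding DP_eq by simp
qed

lemma clause_set_DP:
  assumes "clause_set F"
  shows "clause_set (DP v F)"
proof -
  have fin: "finite F" and cl: "\<And>C. C \<in> F \<Longrightarrow> clause C"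
    using assms unfolding clause_set_def by auto
  have "clause A" if "A \<in> DP v F" for A
    using that
  proof (cases rule: DP_cases)
    case kept
    then show ?thesis by (simp add: cl)
  next
    case (resolved C D)
    then show ?thesis by (simp add: cl clause_resolvent)
  qed
  then show ?thesis
    unfolding clause_set_def by (simp add: fin finite_DP)
qed

lemma kept_resolvent_clash:
  assumes "hitting F" "A \<in> F" "v \<notin> vars A" "C \<in> F" "C \<inter> comp_set D = {Pos v}"
  shows "\<exists>x\<in>A. comp x \<in> resolvent v C D"
proof -
  have "A \<noteq> C"
    using assms(3) resolvable_lits[OF assms(5)] var_of_mem_vars by fastforce
  then obtain x where "x \<in> A" "comp x \<in> C"
    using hitting_clash assms by blast
  moreover have "var_of x \<noteq> v"
    using \<open>x \<in> A\<close> assms(3) var_of_mem_vars by metis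
  ultimately show ?thesis
    by (auto simp: mem_resolvent_iff)
qed

lemma resolvents_clash:
  assumes F: "clause_set F" "hitting F"
    and C\<^sub>1: "C\<^sub>1 \<in> F" "D\<^sub>1 \<in> F" "C\<^sub>1 \<inter> comp_set D\<^sub>1 = {Pos v}"
    and C\<^sub>2: "C\<^sub>2 \<in> F" "D\<^sub>2 \<in> F" "C\<^sub>2 \<inter> comp_set D\<^sub>2 = {Pos v}"
    and ne: "resolvent v C\<^sub>1 D\<^sub>1 \<noteq> resolvent v C\<^sub>2 D\<^sub>2"
  shows "\<exists>x\<in>resolvent v C\<^sub>1 D\<^sub>1. comp x \<in> resolvent v C\<^sub>2 D\<^sub>2"
proof -
  have cl: "clause E" if "E \<in> F" for E
    using F(1) that unfolding clause_set_def by blast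
  have clash_off_v: "\<exists>x\<in>E\<^sub>1. comp x \<in> E\<^sub>2 \<and> var_of x \<noteq> v"
    if E: "E\<^sub>1 \<in> F" "E\<^sub>2 \<in> F" "E\<^sub>1 \<noteq> E\<^sub>2" and l: "l \<in> E\<^sub>1" "l \<in> E\<^sub>2" "var_of l = v"
    for E\<^sub>1 E\<^sub>2 l
  proof -
    obtain x where x: "x \<in> E\<^sub>1" "comp x \<in> E\<^sub>2"
      using hitting_clash[OF F(2) E] by blast
    have "var_of x \<noteq> var_of l"
      by (rule clash_var_ne_of_common_lit[OF cl[OF E(1)] cl[OF E(2)] l(1,2) x])
    with x l(3) show ?thesis
      by blast
  qed
  have pos: "Pos v \<in> C\<^sub>1" "Pos v \<in> C\<^sub>2" and neg: "Neg v \<in> D\<^sub>1" "Neg v \<in> D\<^sub>2"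
    using resolvable_lits[OF C\<^sub>1(3)] resolvable_lits[OF C\<^sub>2(3)] by simp_all
  have "C\<^sub>1 \<noteq> C\<^sub>2 \<or> D\<^sub>1 \<noteq> D\<^sub>2"
    using ne by blast
  then obtain x where "x \<in> C\<^sub>1 \<union> D\<^sub>1" "comp x \<in> C\<^sub>2 \<union> D\<^sub>2" "var_of x \<noteq> v"
  proof
    assume "C\<^sub>1 \<noteq> C\<^sub>2"
    then show ?thesis
      using clash_off_v[OF C\<^sub>1(1) C\<^sub>2(1) _ pos] that by auto
  next
    assume "D\<^sub>1 \<noteq> D\<^sub>2"
    then show ?thesis
      using clash_off_v[OF C\<^sub>1(2) C\<^sub>2(2) _ neg] that by auto
  qed
  then show ?thesis
    by (auto simp: mem_resolvent_iff)
qed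

lemma DP_clash:
  assumes F: "clause_set F" "hitting F"
    and A: "A \<in> DP v F" and B: "B \<in> DP v F" and ne: "A \<noteq> B"
  shows "\<exists>x\<in>A. comp x \<in> B"
  using A
proof (cases rule: DP_cases)
  case A_kept: kept
  show ?thesis
    using B
  proof (cases rule: DP_cases)
    case kept
    then show ?thesis using A_kept hitting_clash[OF F(2)] ne by blast
  next
    case (resolved C D)
    then show ?thesis using kept_resolvent_clash[OF F(2) A_kept] by blast
  qed
next
  case A_resolved: (resolved C\<^sub>1 D\<^sub>1)
  show ?thesis
    using B
  proof (cases rule: DP_cases)
    case kept
    then obtain y where "y \<in> B" "comp y \<in> A"
      using kept_resolvent_clash[OF F(2)] A_resolved by blast
    then show ?thesis
      by (metis comp_comp)
  next
    case (resolved C\<^sub>2 D\<^sub>2)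
    then show ?thesis
      using resolvents_clash[OF F] A_resolved ne by blast
  qed
qed

theorem lemma4:
  fixes F :: "'v lit set set" and v :: 'v
  assumes "clause_set F" and "hitting F"
  shows "clause_set (DP v F) \<and> hitting (DP v F)"
  using clause_set_DP[OF assms(1)] DP_clash[OF assms]
  unfolding hitting_def inter_comp_set_nonempty_iff by blast

end
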